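(* Let $q\ge2$, $\mu,R>0$ and $\omega=\min\{1,\mu/4\}$. There is no sequence of $l_i$-shot ID codes for $\Pi^q_{n_i}$, $i=1,2,\dots$, with $n_i\to\infty$, $l_i/n_i^{\omega}\to0$, $M_i\ge 2^{R n_i^{l_i(q-1)}}$ messages, and type-I and type-II error probabilities satisfying $\lambda_{1,i}<n_i^{-\mu}$ and $\lambda_{2,i}<n_i^{-\mu}$ for all $i$.
   Context: Fix an integer $q\ge 2$ and let $\mathcal A_q=\{1,\dots,q\}$. For $n\ge1$ and $\sigma\in S_n$ (the symmetric group on $\{1,\dots,n\}$), $\sigma\mathbf x=(x_{\sigma^{-1}(1)},\dots,x_{\sigma^{-1}(n)})$ for $\mathbf x\in\mathcal A_q^n$. The $n$-block $q$-ary uniform permutation channel $\Pi^q_n$ has input/output alphabet $\mathcal A_q^n$ and $\Pi^q_n(\mathbf y\mid\mathbf x)=\frac1{n!}\sum_{\sigma\in S_n}\mathbf 1\{\mathbf y=\sigma\mathbf x\}$. Using it $l$ times (independently on each block) gives the channel $W^{(l)}$ on $(\mathcal A_q^n)^l$ with $W^{(l)}(\mathbf y^{(1)},\dots,\mathbf y^{(l)}\mid \mathbf x^{(1)},\dots,\mathbf x^{(l)})=\prod_{s=1}^l\Pi^q_n(\mathbf y^{(s)}\mid\mathbf x^{(s)})$. An $l$-shot ID code with $M$ messages for $\Pi^q_n$ (an "$(n,l,M,\lambda_1,\lambda_2)$ ID code") is a family $\{(Q_i,\mathcal D_i)\}_{i=1}^M$ with $Q_i$ a probability distribution on $(\mathcal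 A_q^n)^l$ and $\mathcal D_i\subseteq(\mathcal A_q^n)^l$; its error probabilities are $\lambda_{i\to j}=\sum_{\underline{\mathbf x}}Q_i(\underline{\mathbf x})\sum_{\underline{\mathbf y}\in\mathcal D_j}W^{(l)}(\underline{\mathbf y}\mid\underline{\mathbf x})$ ($i\neq j$), $\lambda_{i\not\to i}=\sum_{\underline{\mathbf x}}Q_i(\underline{\mathbf x})\sum_{\underline{\mathbf y}\notin\mathcal D_i}W^{(l)}(\underline{\mathbf y}\mid\underline{\mathbf x})$, type-I error probability $\lambda_1=\max_i\lambda_{i\not\to i}$, type-II error probability $\lambda_2=\max_{i\ne j}\lambda_{i\to j}$. *)

theory Defs
  imports "HOL-Analysis.Analysis" "HOL-Combinatorics.Permutations"
begin

definition blocks :: "nat \<Rightarrow> nat \<Rightarrow> nat list set" where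
  "blocks q n = {x. length x = n \<and> set x \<subseteq> {1..q}}"

definition tuples :: "nat \<Rightarrow> nat \<Rightarrow> nat \<Rightarrow> nat list list set" where
  "tuples q n l = {xs. length xs = l \<and> (\<forall>x\<in>set xs. x \<in> blocks q n)}"

definition perm_act :: "(nat \<Rightarrow> nat) \<Rightarrow> nat list \<Rightarrow> nat list" where
  "perm_act \<sigma> x = map (\<lambda>i. x ! inv \<sigma> i) [0..<length x]"

definition perm_channel :: "nat \<Rightarrow> nat list \<Rightarrow> nat list \<Rightarrow> real" where
  "perm_channel n y x =
     real (card {\<sigma>. \<sigma> permutes {0..<n} \<and> y = perm_act \<sigma> x}) / fact n"

definition W_l :: "nat \<Rightarrow> nat \<Rightarrow> nat list list \<Rightarrow> nat list list \<Rightarrow> real" where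
  "W_l n l ys xs = (\<Prod>s<l. perm_channel n (ys ! s) (xs ! s))"

text \<open>Messages are indexed 0..M-1; Q i is a distribution on tuples, D i a decoding set.\<close>
definition is_id_code ::
  "nat \<Rightarrow> nat \<Rightarrow> nat \<Rightarrow> nat \<Rightarrow> (nat \<Rightarrow> nat list list \<Rightarrow> real) \<Rightarrow> (nat \<Rightarrow> nat list list set) \<Rightarrow> bool" where
  "is_id_code q n l M Q D \<longleftrightarrow>
     (\<forall>i<M. (\<forall>x\<in>tuples q n l. Q i x \<ge> 0) \<and> (\<Sum>x\<in>tuples q n l. Q i x) = 1
             \<and> D i \<subseteq> tuples q n l)"

definition err_to :: "nat \<Rightarrow> nat \<Rightarrow> nat \<Rightarrow> (nat \<Rightarrow> nat list list \<Rightarrow> real) \<Rightarrow> (nat \<Rightarrow> nat list list set) \<Rightarrow> nat \<Rightarrow> nat \<Rightarrow> real" where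
  "err_to q n l Q D i j =
     (\<Sum>x\<in>tuples q n l. Q i x * (\<Sum>y\<in>D j. W_l n l y x))"

definition err_miss :: "nat \<Rightarrow> nat \<Rightarrow> nat \<Rightarrow> (nat \<Rightarrow> nat list list \<Rightarrow> real) \<Rightarrow> (nat \<Rightarrow> nat list list set) \<Rightarrow> nat \<Rightarrow> real" where
  "err_miss q n l Q D i =
     (\<Sum>x\<in>tuples q n l. Q i x * (\<Sum>y\<in>tuples q n l - D i. W_l n l y x))"

definition type1_err where
  "type1_err q n l M Q D = Max {err_miss q n l Q D i | i. i < M}"

definition type2_err where
  "type2_err q n l M Q D = Max {err_to q n l Q D i j | i j. i < M \<and> j < M \<and> i \<noteq> j}"

end

theory Submission
  imports Defs
begin

text \<open>
  The output distribution of the permutation channel on an \<open>l\<close>-tuple of blocks depends only on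
  the type of the tuple (the letter counts of its blocks), and there are only
  \<open>K = (n+1)^(l(q-1))\<close> types. Thresholding the decoding sets at \<open>1/2\<close> yields type-closed
  acceptance sets \<open>A\<^sub>i\<close> with \<open>Q\<^sub>i(A\<^sub>i) \<ge> 1 - p\<close> and \<open>Q\<^sub>i(A\<^sub>j) \<le> p\<close>, where \<open>p\<close> is twice the error.
  If \<open>(M-1) p^m < (1-p)^m\<close>, a union bound for the \<open>m\<close>-fold product of \<open>Q\<^sub>i\<close> gives an \<open>m\<close>-tuple
  of points of \<open>A\<^sub>i\<close> not contained in any other \<open>A\<^sub>j\<close>; its set of types determines \<open>i\<close>. Hence
  \<open>M\<close> is at most the number of sets of at most \<open>m\<close> types, which is below \<open>(1+x)^K / x^m\<close> for
  every \<open>0 < x \<le> 1\<close>. Taking \<open>m \<approx> R n^(l(q-1)) / ln((1-p)/p)\<close> with \<open>x\<close> and \<open>p\<close> small constants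
  makes this less than \<open>2^(R n^(l(q-1)))\<close> once \<open>n\<close> is large and \<open>l(q-1) \<le> n\<close>, and the growth
  condition on \<open>l\<^sub>i\<close> guarantees the latter eventually.
\<close>

lemma sum_UN_le:
  fixes f :: "'a \<Rightarrow> 'b::ordered_ab_group_add"
  assumes "finite I" "\<And>i. i \<in> I \<Longrightarrow> finite (A i)" "\<And>x. x \<in> (\<Union>i\<in>I. A i) \<Longrightarrow> 0 \<le> f x"
  shows "sum f (\<Union>i\<in>I. A i) \<le> (\<Sum>i\<in>I. sum f (A i))"
  using assms
proof (induction I rule: finite_induct)
  case (insert i I)
  let ?U = "\<Union>j\<in>I. A j"
  have "sum f (\<Union>j\<in>insert i I. A j) = sum f (A i) + sum f ?U - sum f (A i \<inter> ?U)"
    using insert.hyps insert.prems(1) by (simp add: sum_Un)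
  also have "\<dots> \<le> sum f (A i) + sum f ?U"
  proof -
    have "0 \<le> sum f (A i \<inter> ?U)" using insert.prems(2) by (intro sum_nonneg) auto
    then show ?thesis by simp
  qed
  also have "\<dots> \<le> sum f (A i) + (\<Sum>j\<in>I. sum f (A j))"
    using insert.IH insert.prems by (simp add: add_left_mono)
  finally show ?case using insert.hyps by simp
qed simp

lemma sum_prod_lists_length_eq:
  fixes F :: "nat \<Rightarrow> 'a \<Rightarrow> 'b::comm_semiring_1"
  assumes "finite B"
  shows "(\<Sum>s\<in>{s. set s \<subseteq> B \<and> length s = m}. \<Prod>k<m. F k (s ! k)) = (\<Prod>k<m. \<Sum>y\<in>B. F k y)"
proof (induction m arbitrary: F)
  case 0
  have "{s. set s \<subseteq> B \<and> length s = 0} = {[]}" by auto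
  then show ?case by simp
next
  case (Suc m)
  let ?L = "{s. set s \<subseteq> B \<and> length s = m}"
  have cons_image: "{s. set s \<subseteq> B \<and> length s = Suc m} = (\<lambda>(y, s). y # s) ` (B \<times> ?L)"
  proof (rule set_eqI, rule iffI)
    fix s assume "s \<in> {s. set s \<subseteq> B \<and> length s = Suc m}"
    then show "s \<in> (\<lambda>(y, s). y # s) ` (B \<times> ?L)"
      by (cases s) (auto intro!: image_eqI)
  qed auto
  have inj: "inj_on (\<lambda>(y, s). y # s) (B \<times> ?L)"
    by (auto simp: inj_on_def)
  have "(\<Sum>s\<in>{s. set s \<subseteq> B \<and> length s = Suc m}. \<Prod>k<Suc m. F k (s ! k))
      = (\<Sum>(y, s)\<in>B \<times> ?L. F 0 y * (\<Prod>k<m. F (Suc k) (s ! k)))"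
    unfolding cons_image by (subst sum.reindex[OF inj])
      (simp add: case_prod_beta prod.lessThan_Suc_shift del: prod.lessThan_Suc)
  also have "\<dots> = (\<Sum>y\<in>B. F 0 y) * (\<Sum>s\<in>?L. \<Prod>k<m. F (Suc k) (s ! k))"
    by (simp add: sum_product sum.cartesian_product)
  also have "\<dots> = (\<Prod>k<Suc m. \<Sum>y\<in>B. F k y)"
    using Suc.IH[of "\<lambda>k. F (Suc k)"] by (simp add: prod.lessThan_Suc_shift del: prod.lessThan_Suc)
  finally show ?case .
qed

lemma card_small_subsets_le:
  fixes x :: real
  assumes "finite T" "0 < x" "x \<le> 1"
  shows "real (card {C. C \<subseteq> T \<and> card C \<le> m}) \<le> (1 + x) ^ card T / x ^ m"
proof -
  let ?S = "{C. C \<subseteq> T \<and> card C \<le> m}"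
  have "real (card ?S) = (\<Sum>C\<in>?S. 1)" by simp
  also have "\<dots> \<le> (\<Sum>C\<in>?S. x ^ card C / x ^ m)"
  proof (rule sum_mono)
    fix C assume "C \<in> ?S"
    then have "x ^ m \<le> x ^ card C" using assms by (intro power_decreasing) auto
    then show "1 \<le> x ^ card C / x ^ m" using assms by simp
  qed
  also have "\<dots> \<le> (\<Sum>C\<in>Pow T. x ^ card C / x ^ m)"
    using assms by (intro sum_mono2) auto
  also have "\<dots> = (\<Sum>C\<in>Pow T. (\<Prod>a\<in>C. x) * (\<Prod>a\<in>T - C. 1)) / x ^ m"
    by (simp add: sum_divide_distrib)
  also have "\<dots> = (1 + x) ^ card T / x ^ m"
    using prod_add[OF assms(1), of "\<lambda>_. x" "\<lambda>_. 1"] by (simp add: add.commute)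
  finally show ?thesis .
qed

lemma finite_blocks: "finite (blocks q n)"
  unfolding blocks_def using finite_lists_length_eq[of "{1..q}" n] by (simp add: conj_commute)

lemma tuples_eq_lists: "tuples q n l = {xs. set xs \<subseteq> blocks q n \<and> length xs = l}"
  unfolding tuples_def by auto

lemma finite_tuples: "finite (tuples q n l)"
  unfolding tuples_eq_lists by (rule finite_lists_length_eq[OF finite_blocks])

lemma length_perm_act [simp]: "length (perm_act \<sigma> x) = length x"
  by (simp add: perm_act_def)

lemma nth_perm_act: "i < length x \<Longrightarrow> perm_act \<sigma> x ! i = x ! inv \<sigma> i"
  by (simp add: perm_act_def)

lemma inv_permutes_less: "\<sigma> permutes {0..<(n::nat)} \<Longrightarrow> i < n \<Longrightarrow> inv \<sigma> i < n"
  using permutes_in_image[OF permutes_inv, of \<sigma> "{0..<n}" i] by auto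

lemma perm_act_in_blocks:
  assumes "\<sigma> permutes {0..<n}" "x \<in> blocks q n"
  shows "perm_act \<sigma> x \<in> blocks q n"
proof -
  have "set (perm_act \<sigma> x) \<subseteq> set x"
  proof
    fix z assume "z \<in> set (perm_act \<sigma> x)"
    then obtain i where i: "i < length x" "z = perm_act \<sigma> x ! i"
      by (metis in_set_conv_nth length_perm_act)
    have "inv \<sigma> i < length x" using assms i inv_permutes_less unfolding blocks_def by auto
    then show "z \<in> set x" using i nth_perm_act by auto
  qed
  then show ?thesis using assms unfolding blocks_def by auto
qed

lemma sum_perm_channel:
  assumes "x \<in> blocks q n"
  shows "(\<Sum>y\<in>blocks q n. perm_channel n y x) = 1"
proof -
  let ?P = "{\<sigma>. \<sigma> permutes {0..<n}}"
  have "(\<Sum>y\<in>blocks q n. card {\<sigma>. \<sigma> permutes {0..<n} \<and> y = perm_act \<sigma> x})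
       = (\<Sum>y\<in>blocks q n. \<Sum>\<sigma>\<in>{\<sigma>. \<sigma> \<in> ?P \<and> perm_act \<sigma> x = y}. (1::nat))"
    by (intro sum.cong) (auto intro: arg_cong[where f = card])
  also have "\<dots> = card ?P"
    using assms perm_act_in_blocks
    by (subst sum.group[OF finite_permutations[of "{0..<n}"] finite_blocks]) auto
  also have "\<dots> = fact n"
    using card_permutations[of "{0..<n}" n] by simp
  finally have "real (\<Sum>y\<in>blocks q n. card {\<sigma>. \<sigma> permutes {0..<n} \<and> y = perm_act \<sigma> x}) = fact n"
    by (metis of_nat_fact)
  then show ?thesis
    unfolding perm_channel_def by (simp add: sum_divide_distrib[symmetric])
qed

lemma sum_W_l:
  assumes "xs \<in> tuples q n l"
  shows "(\<Sum>ys\<in>tuples q n l. W_l n l ys xs) = 1"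
proof -
  have "(\<Sum>ys\<in>tuples q n l. W_l n l ys xs) = (\<Prod>k<l. \<Sum>y\<in>blocks q n. perm_channel n y (xs ! k))"
    unfolding W_l_def tuples_eq_lists by (rule sum_prod_lists_length_eq[OF finite_blocks])
  also have "\<dots> = 1"
    using assms by (intro prod.neutral) (auto simp: tuples_def sum_perm_channel)
  finally show ?thesis .
qed

lemma W_l_nonneg: "0 \<le> W_l n l ys xs"
  unfolding W_l_def perm_channel_def by (intro prod_nonneg) auto

lemma perm_act_permute_list:
  assumes "\<sigma> permutes {0..<length b}" "p permutes {..<length b}"
  shows "perm_act \<sigma> (permute_list p b) = perm_act (\<sigma> \<circ> inv p) b"
proof (rule nth_equalityI)
  fix i assume "i < length (perm_act \<sigma> (permute_list p b))"
  then have i: "i < length b" by simp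
  have "bij \<sigma>" "bij p" using assms permutes_bij by blast+
  then have "inv (\<sigma> \<circ> inv p) = p \<circ> inv \<sigma>"
    by (simp add: o_inv_distrib bij_imp_bij_inv inv_inv_eq)
  moreover have "inv \<sigma> i < length b" using inv_permutes_less[OF assms(1) i] .
  ultimately show "perm_act \<sigma> (permute_list p b) ! i = perm_act (\<sigma> \<circ> inv p) b ! i"
    using i assms(2) by (simp add: nth_perm_act permute_list_nth)
qed simp

lemma perm_channel_cong_mset:
  assumes "mset b' = mset b" "length b = n"
  shows "perm_channel n y b' = perm_channel n y b"
proof -
  obtain p where p: "p permutes {..<length b}" "permute_list p b = b'"
    using mset_eq_permutation[of b' b] assms(1) by metis
  have p': "p permutes {0..<n}" using p assms(2) by (simp add: atLeast0LessThan)
  let ?S = "\<lambda>b. {\<sigma>. \<sigma> permutes {0..<n} \<and> y = perm_act \<sigma> b}"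
  have act: "perm_act \<sigma> b' = perm_act (\<sigma> \<circ> inv p) b" if "\<sigma> permutes {0..<n}" for \<sigma>
    using perm_act_permute_list[of \<sigma> b p] that p assms(2) by simp
  have "?S b' = (\<lambda>\<tau>. \<tau> \<circ> p) ` ?S b"
  proof (rule set_eqI, rule iffI)
    fix \<sigma> assume \<sigma>: "\<sigma> \<in> ?S b'"
    show "\<sigma> \<in> (\<lambda>\<tau>. \<tau> \<circ> p) ` ?S b"
    proof (rule image_eqI)
      show "\<sigma> = (\<sigma> \<circ> inv p) \<circ> p"
        using p' by (simp add: o_assoc[symmetric] permutes_inv_o(2))
      show "\<sigma> \<circ> inv p \<in> ?S b"
        using \<sigma> act permutes_compose[OF permutes_inv[OF p']] by simp
    qed
  next
    fix \<sigma> assume "\<sigma> \<in> (\<lambda>\<tau>. \<tau> \<circ> p) ` ?S b"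
    then obtain \<tau> where \<tau>: "\<tau> permutes {0..<n}" "y = perm_act \<tau> b" "\<sigma> = \<tau> \<circ> p" by auto
    then have "\<sigma> permutes {0..<n}" using permutes_compose[OF p'] by blast
    moreover have "\<sigma> \<circ> inv p = \<tau>" using \<tau>(3) p' by (simp add: comp_assoc permutes_inv_o(1))
    ultimately show "\<sigma> \<in> ?S b'" using act \<tau>(2) by auto
  qed
  moreover have "inj_on (\<lambda>\<tau>. \<tau> \<circ> p) (?S b)"
  proof (rule inj_onI)
    fix \<tau> \<tau>' assume "\<tau> \<circ> p = \<tau>' \<circ> p"
    then have "\<tau> \<circ> p \<circ> inv p = \<tau>' \<circ> p \<circ> inv p" by simp
    then show "\<tau> = \<tau>'" using p' by (simp add: comp_assoc permutes_inv_o(1))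
  qed
  ultimately show ?thesis unfolding perm_channel_def by (simp add: card_image)
qed

lemma W_l_cong_mset:
  assumes "\<And>s. s < l \<Longrightarrow> mset (xs' ! s) = mset (xs ! s)" "\<And>s. s < l \<Longrightarrow> length (xs ! s) = n"
  shows "W_l n l ys xs' = W_l n l ys xs"
  unfolding W_l_def by (intro prod.cong refl perm_channel_cong_mset) (use assms in auto)

lemma mset_eq_of_counts_eq:
  fixes b b' :: "nat list"
  assumes "length b = length b'" "set b \<subseteq> {1..q}" "set b' \<subseteq> {1..q}"
    and counts: "\<And>a. a \<in> {1..<q} \<Longrightarrow> count (mset b) a = count (mset b') a"
  shows "mset b = mset b'"
proof -
  let ?lt = "\<lambda>a. a < q" and ?ge = "\<lambda>a. \<not> a < q"
  have lt: "filter_mset ?lt (mset b) = filter_mset ?lt (mset b')"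
  proof (rule multiset_eqI)
    fix a
    show "count (filter_mset ?lt (mset b)) a = count (filter_mset ?lt (mset b')) a"
    proof (cases "1 \<le> a \<and> a < q")
      case False
      then have "a \<notin> set b \<or> \<not> a < q" "a \<notin> set b' \<or> \<not> a < q" using assms(2,3) by auto
      then show ?thesis by (metis count_eq_zero_iff count_filter_mset set_mset_mset)
    qed (use counts in auto)
  qed
  have "size (filter_mset ?ge (mset b)) = size (filter_mset ?ge (mset b'))"
    using lt assms(1) multiset_partition[of "mset b" ?lt] multiset_partition[of "mset b'" ?lt]
    by (metis add_left_cancel size_mset size_union)
  moreover have "set_mset (filter_mset ?ge (mset b)) \<subseteq> {q}" "set_mset (filter_mset ?ge (mset b')) \<subseteq> {q}"
    using assms(2,3) by fastforce+
  ultimately have "filter_mset ?ge (mset b) = filter_mset ?ge (mset b')"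
    using set_mset_subset_singletonD by metis
  then show ?thesis using lt by (metis multiset_partition)
qed

text \<open>The count of the letter \<open>q\<close> is left out: it is determined by the block length.\<close>

definition tuple_type :: "nat \<Rightarrow> nat \<Rightarrow> nat list list \<Rightarrow> nat \<times> nat \<Rightarrow> nat" where
  "tuple_type q l xs = restrict (\<lambda>(s, a). count (mset (xs ! s)) a) ({0..<l} \<times> {1..<q})"

lemma tuple_type_in_PiE:
  assumes "xs \<in> tuples q n l"
  shows "tuple_type q l xs \<in> ({0..<l} \<times> {1..<q}) \<rightarrow>\<^sub>E {0..n}"
proof -
  have "count (mset (xs ! s)) a \<le> n" if "s < l" for s a
    using assms that count_le_size[of "mset (xs ! s)" a] by (auto simp: tuples_def blocks_def)
  then show ?thesis unfolding tuple_type_def by auto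
qed

lemma W_l_cong_tuple_type:
  assumes "xs \<in> tuples q n l" "xs' \<in> tuples q n l" "tuple_type q l xs' = tuple_type q l xs"
  shows "W_l n l ys xs' = W_l n l ys xs"
proof (rule W_l_cong_mset)
  fix s assume s: "s < l"
  then have blocks: "xs ! s \<in> blocks q n" "xs' ! s \<in> blocks q n"
    using assms(1,2) by (auto simp: tuples_def)
  then show "length (xs ! s) = n" by (simp add: blocks_def)
  show "mset (xs' ! s) = mset (xs ! s)"
  proof (rule mset_eq_of_counts_eq)
    fix a assume "a \<in> {1..<q}"
    then show "count (mset (xs' ! s)) a = count (mset (xs ! s)) a"
      using fun_cong[OF assms(3), of "(s, a)"] s by (simp add: tuple_type_def)
  qed (use blocks in \<open>auto simp: blocks_def\<close>)
qed

lemma exists_list_separating: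
  fixes P :: "'a \<Rightarrow> real"
  assumes "finite X" "finite J" "\<And>x. x \<in> X \<Longrightarrow> 0 \<le> P x" "A\<^sub>0 \<subseteq> X" "\<And>j. j \<in> J \<Longrightarrow> A j \<subseteq> X"
    and "1 - p \<le> sum P A\<^sub>0" "\<And>j. j \<in> J \<Longrightarrow> sum P (A j) \<le> p" "p \<le> 1"
    and "real (card J) * p ^ m < (1 - p) ^ m"
  obtains s where "set s \<subseteq> A\<^sub>0" "length s = m" "\<And>j. j \<in> J \<Longrightarrow> \<not> set s \<subseteq> A j"
proof -
  let ?lists = "\<lambda>B. {s. set s \<subseteq> B \<and> length s = m}"
  define w where "w s = (\<Prod>k<m. P (s ! k))" for s
  have sum_w: "sum w (?lists B) = sum P B ^ m" if "B \<subseteq> X" for B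
    using sum_prod_lists_length_eq[OF finite_subset[OF that assms(1)], of "\<lambda>_. P" m]
    by (simp add: w_def)
  have w_nonneg: "0 \<le> w s" if "set s \<subseteq> X" "length s = m" for s
    unfolding w_def using that assms(3) by (intro prod_nonneg) (auto simp: subset_iff)
  have "\<exists>s\<in>?lists A\<^sub>0. \<forall>j\<in>J. \<not> set s \<subseteq> A j"
  proof (rule ccontr)
    assume "\<not> ?thesis"
    then have cover: "?lists A\<^sub>0 \<subseteq> (\<Union>j\<in>J. ?lists (A j))" by blast
    have finite_lists: "finite (?lists (A j))" if "j \<in> J" for j
      using finite_lists_length_eq[OF finite_subset[OF assms(5)[OF that] assms(1)]] .
    have "(1 - p) ^ m \<le> sum P A\<^sub>0 ^ m"
      using assms(6,8) by (intro power_mono) auto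
    also have "\<dots> = sum w (?lists A\<^sub>0)"
      using sum_w assms(4) by simp
    also have "\<dots> \<le> sum w (\<Union>j\<in>J. ?lists (A j))"
    proof (rule sum_mono2[OF _ cover])
      show "finite (\<Union>j\<in>J. ?lists (A j))" using assms(2) finite_lists by blast
      show "0 \<le> w s" if "s \<in> (\<Union>j\<in>J. ?lists (A j)) - ?lists A\<^sub>0" for s
        using that assms(5) by (fastforce intro: w_nonneg)
    qed
    also have "\<dots> \<le> (\<Sum>j\<in>J. sum w (?lists (A j)))"
      using assms(2,5) finite_lists by (intro sum_UN_le w_nonneg) auto
    also have "\<dots> = (\<Sum>j\<in>J. sum P (A j) ^ m)"
      using sum_w assms(5) by simp
    also have "\<dots> \<le> (\<Sum>j\<in>J. p ^ m)"
    proof (intro sum_mono power_mono)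
      fix j assume "j \<in> J"
      then show "sum P (A j) \<le> p" "0 \<le> sum P (A j)"
        using assms(3,5,7) by (auto intro!: sum_nonneg)
    qed
    finally show False using assms(9) by simp
  qed
  then show ?thesis using that by blast
qed

lemma card_le_card_small_type_sets:
  fixes Q :: "nat \<Rightarrow> 'a \<Rightarrow> real" and A :: "nat \<Rightarrow> 'a set" and tp :: "'a \<Rightarrow> 'b"
  assumes "finite X" "finite T" "tp ` X \<subseteq> T"
    and "\<And>i x. i < M \<Longrightarrow> x \<in> X \<Longrightarrow> 0 \<le> Q i x" "\<And>i. i < M \<Longrightarrow> A i \<subseteq> X"
    and type_closed: "\<And>i x y. i < M \<Longrightarrow> x \<in> X \<Longrightarrow> y \<in> A i \<Longrightarrow> tp x = tp y \<Longrightarrow> x \<in> A i"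
    and "\<And>i. i < M \<Longrightarrow> 1 - p \<le> (\<Sum>x\<in>A i. Q i x)"
    and "\<And>i j. i < M \<Longrightarrow> j < M \<Longrightarrow> i \<noteq> j \<Longrightarrow> (\<Sum>x\<in>A j. Q i x) \<le> p"
    and "p \<le> 1" "real (M - 1) * p ^ m < (1 - p) ^ m"
  shows "M \<le> card {C. C \<subseteq> T \<and> card C \<le> m}"
proof -
  have "\<exists>s. set s \<subseteq> A i \<and> length s = m \<and> (\<forall>j<M. j \<noteq> i \<longrightarrow> \<not> set s \<subseteq> A j)"
    if i: "i < M" for i
  proof -
    have "{j. j < M \<and> j \<noteq> i} = {..<M} - {i}" by auto
    then have "card {j. j < M \<and> j \<noteq> i} = M - 1" using i by simp
    then obtain s where "set s \<subseteq> A i" "length s = m" "\<And>j. j \<in> {j. j < M \<and> j \<noteq> i} \<Longrightarrow> \<not> set s \<subseteq> A j"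
      using exists_list_separating[of X "{j. j < M \<and> j \<noteq> i}" "Q i" "A i" A p m] i assms
      by auto
    then show ?thesis by blast
  qed
  then obtain S where S: "\<And>i. i < M \<Longrightarrow> set (S i) \<subseteq> A i \<and> length (S i) = m
      \<and> (\<forall>j<M. j \<noteq> i \<longrightarrow> \<not> set (S i) \<subseteq> A j)"
    by metis
  define types where "types i = tp ` set (S i)" for i
  have types_small: "types ` {..<M} \<subseteq> {C. C \<subseteq> T \<and> card C \<le> m}"
  proof (intro image_subsetI CollectI conjI)
    fix i assume "i \<in> {..<M}"
    then have i: "i < M" by simp
    then have "set (S i) \<subseteq> X" using S assms(5) by blast
    then show "types i \<subseteq> T" using assms(3) unfolding types_def by (meson image_mono order_trans)
    show "card (types i) \<le> m"
      using S[OF i] unfolding types_def by (metis card_image_le card_length finite_set le_trans)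
  qed
  have "inj_on types {..<M}"
  proof (rule inj_onI, rule ccontr)
    fix i j assume "i \<in> {..<M}" "j \<in> {..<M}" and eq: "types i = types j" and "i \<noteq> j"
    then have i: "i < M" and j: "j < M" by auto
    have "set (S i) \<subseteq> A j"
    proof
      fix x assume x: "x \<in> set (S i)"
      then have "tp x \<in> types j" using eq unfolding types_def by auto
      then obtain y where y: "y \<in> set (S j)" "tp x = tp y" unfolding types_def by auto
      have "x \<in> X" using x S[OF i] assms(5)[OF i] by blast
      moreover have "y \<in> A j" using y S[OF j] by blast
      ultimately show "x \<in> A j" using type_closed[OF j _ _ y(2)] by blast
    qed
    then show False using S[OF i] j \<open>i \<noteq> j\<close> by blast
  qed
  then have "M = card (types ` {..<M})" by (simp add: card_image)
  also have "\<dots> \<le> card {C. C \<subseteq> T \<and> card C \<le> m}"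
    using types_small assms(2) by (intro card_mono) (auto intro: finite_subset[of _ "Pow T"])
  finally show ?thesis .
qed

definition accept_set :: "nat \<Rightarrow> nat \<Rightarrow> nat \<Rightarrow> nat list list set \<Rightarrow> nat list list set" where
  "accept_set q n l D = {x \<in> tuples q n l. 1 / 2 \<le> (\<Sum>y\<in>D. W_l n l y x)}"

lemma accept_set_subset: "accept_set q n l D \<subseteq> tuples q n l"
  unfolding accept_set_def by blast

lemma accept_set_cong_tuple_type:
  assumes "x \<in> tuples q n l" "y \<in> accept_set q n l D" "tuple_type q l x = tuple_type q l y"
  shows "x \<in> accept_set q n l D"
proof -
  have "(\<Sum>z\<in>D. W_l n l z x) = (\<Sum>z\<in>D. W_l n l z y)"
    using assms W_l_cong_tuple_type[of y q n l x] by (simp add: accept_set_def)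
  then show ?thesis using assms(1,2) by (simp add: accept_set_def)
qed

lemma sum_accept_set_ge:
  assumes "is_id_code q n l M Q D" "i < M"
  shows "1 - 2 * err_miss q n l Q D i \<le> (\<Sum>x\<in>accept_set q n l (D i). Q i x)"
proof -
  let ?X = "tuples q n l" and ?A = "accept_set q n l (D i)"
  let ?miss = "\<lambda>x. \<Sum>y\<in>?X - D i. W_l n l y x"
  have Q: "\<And>x. x \<in> ?X \<Longrightarrow> 0 \<le> Q i x" "(\<Sum>x\<in>?X. Q i x) = 1" "D i \<subseteq> ?X"
    using assms unfolding is_id_code_def by auto
  have miss_gt: "1 / 2 < ?miss x" if "x \<in> ?X - ?A" for x
  proof -
    have "(\<Sum>y\<in>D i. W_l n l y x) + ?miss x = (\<Sum>y\<in>?X. W_l n l y x)"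
      using sum.subset_diff[OF Q(3) finite_tuples, of "\<lambda>y. W_l n l y x"] by linarith
    also have "\<dots> = 1" using sum_W_l that by blast
    moreover have "(\<Sum>y\<in>D i. W_l n l y x) < 1 / 2" using that by (auto simp: accept_set_def)
    ultimately show ?thesis by linarith
  qed
  have "(\<Sum>x\<in>?X - ?A. Q i x) \<le> (\<Sum>x\<in>?X - ?A. 2 * (Q i x * ?miss x))"
  proof (rule sum_mono)
    fix x assume x: "x \<in> ?X - ?A"
    then have "Q i x * 1 \<le> Q i x * (2 * ?miss x)"
      using Q(1) miss_gt[OF x] by (intro mult_left_mono) auto
    then show "Q i x \<le> 2 * (Q i x * ?miss x)" by (simp add: mult_ac)
  qed
  also have "\<dots> \<le> (\<Sum>x\<in>?X. 2 * (Q i x * ?miss x))"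
    using Q(1) by (intro sum_mono2 finite_tuples mult_nonneg_nonneg sum_nonneg W_l_nonneg) auto
  also have "\<dots> = 2 * err_miss q n l Q D i"
    by (simp add: err_miss_def sum_distrib_left)
  finally show ?thesis
    using Q(2) sum.subset_diff[OF accept_set_subset finite_tuples, of "Q i" q n l "D i"] by simp
qed

lemma sum_accept_set_le:
  assumes "is_id_code q n l M Q D" "i < M"
  shows "(\<Sum>x\<in>accept_set q n l (D j). Q i x) \<le> 2 * err_to q n l Q D i j"
proof -
  let ?X = "tuples q n l" and ?A = "accept_set q n l (D j)"
  let ?hit = "\<lambda>x. \<Sum>y\<in>D j. W_l n l y x"
  have Q: "\<And>x. x \<in> ?X \<Longrightarrow> 0 \<le> Q i x"
    using assms unfolding is_id_code_def by auto
  have "(\<Sum>x\<in>?A. Q i x) \<le> (\<Sum>x\<in>?A. 2 * (Q i x * ?hit x))"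
  proof (rule sum_mono)
    fix x assume x: "x \<in> ?A"
    then have "Q i x * 1 \<le> Q i x * (2 * ?hit x)"
      using Q by (intro mult_left_mono) (auto simp: accept_set_def)
    then show "Q i x \<le> 2 * (Q i x * ?hit x)" by (simp add: mult_ac)
  qed
  also have "\<dots> \<le> (\<Sum>x\<in>?X. 2 * (Q i x * ?hit x))"
    using Q accept_set_subset
    by (intro sum_mono2 finite_tuples mult_nonneg_nonneg sum_nonneg W_l_nonneg) auto
  also have "\<dots> = 2 * err_to q n l Q D i j"
    by (simp add: err_to_def sum_distrib_left)
  finally show ?thesis .
qed

lemma err_miss_le_type1_err:
  "i < M \<Longrightarrow> err_miss q n l Q D i \<le> type1_err q n l M Q D"
  unfolding type1_err_def by (intro Max_ge) auto

lemma err_to_le_type2_err: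
  assumes "i < M" "j < M" "i \<noteq> j"
  shows "err_to q n l Q D i j \<le> type2_err q n l M Q D"
proof -
  have "{err_to q n l Q D i j |i j. i < M \<and> j < M \<and> i \<noteq> j}
      \<subseteq> (\<lambda>(i, j). err_to q n l Q D i j) ` ({..<M} \<times> {..<M})"
    by auto
  then have "finite {err_to q n l Q D i j |i j. i < M \<and> j < M \<and> i \<noteq> j}"
    by (rule finite_subset) auto
  then show ?thesis unfolding type2_err_def using assms by (intro Max_ge) auto
qed

lemma id_code_card_le_small_type_sets:
  assumes "is_id_code q n l M Q D" "type1_err q n l M Q D \<le> e" "type2_err q n l M Q D \<le> e"
    and "M' \<le> M" "2 * e \<le> 1" "real (M' - 1) * (2 * e) ^ m < (1 - 2 * e) ^ m"
  shows "M' \<le> card {C. C \<subseteq> ({0..<l} \<times> {1..<q}) \<rightarrow>\<^sub>E {0..n} \<and> card C \<le> m}"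
proof (rule card_le_card_small_type_sets[where X = "tuples q n l" and tp = "tuple_type q l"
      and Q = Q and A = "\<lambda>j. accept_set q n l (D j)"])
  show "finite (tuples q n l)" by (rule finite_tuples)
  show "finite (({0..<l} \<times> {1..<q}) \<rightarrow>\<^sub>E {0..n})" by (intro finite_PiE) auto
  show "tuple_type q l ` tuples q n l \<subseteq> ({0..<l} \<times> {1..<q}) \<rightarrow>\<^sub>E {0..n}"
    using tuple_type_in_PiE by blast
  show "accept_set q n l (D i) \<subseteq> tuples q n l" for i by (rule accept_set_subset)
  show "x \<in> accept_set q n l (D i)"
    if "x \<in> tuples q n l" "y \<in> accept_set q n l (D i)" "tuple_type q l x = tuple_type q l y" for i x y
    using that by (rule accept_set_cong_tuple_type)
  show "0 \<le> Q i x" if "i < M'" "x \<in> tuples q n l" for i x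
    using that assms(1,4) unfolding is_id_code_def by auto
  show "2 * e \<le> 1" "real (M' - 1) * (2 * e) ^ m < (1 - 2 * e) ^ m" by (fact assms(5,6))+
next
  fix i assume "i < M'"
  then have i: "i < M" using assms(4) by simp
  show "1 - 2 * e \<le> (\<Sum>x\<in>accept_set q n l (D i). Q i x)"
    using sum_accept_set_ge[OF assms(1) i] err_miss_le_type1_err[OF i, of q n l Q D] assms(2)
    by linarith
  fix j assume "j < M'" "i \<noteq> j"
  then show "(\<Sum>x\<in>accept_set q n l (D j). Q i x) \<le> 2 * e"
    using sum_accept_set_le[OF assms(1) i, of j] err_to_le_type2_err[OF i, of j q n l Q D] assms(2-4)
    by fastforce
qed

lemma nat_ceiling_minus_one_less: "0 < y \<Longrightarrow> real (nat \<lceil>y\<rceil> - 1) < y"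
  using ceiling_correct[of y] by (simp add: of_nat_diff)

lemma exp_mult_power_le_power:
  fixes p B :: real
  assumes "0 < p" "p < 1 / 2"
  defines "m \<equiv> nat \<lceil>B / ln ((1 - p) / p)\<rceil>"
  shows "exp B * p ^ m \<le> (1 - p) ^ m"
proof -
  have odds: "1 < (1 - p) / p" using assms(1,2) by (simp add: field_simps)
  then have "B \<le> real m * ln ((1 - p) / p)"
    using real_nat_ceiling_ge[of "B / ln ((1 - p) / p)"] unfolding m_def by (simp add: field_simps)
  then have "exp B \<le> exp (real m * ln ((1 - p) / p))" by simp
  also have "\<dots> = ((1 - p) / p) ^ m"
    using odds by (simp add: exp_of_nat_mult)
  finally have "exp B * p ^ m \<le> ((1 - p) / p) ^ m * p ^ m"
    using assms(1) by (simp add: mult_right_mono)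
  also have "\<dots> = (1 - p) ^ m"
    using assms(1) by (simp add: power_divide)
  finally show ?thesis .
qed

lemma card_types_le:
  assumes "1 \<le> n" "k \<le> n"
  shows "real ((n + 1) ^ k) \<le> 3 * real n ^ k"
proof -
  have "(1 + 1 / real n) ^ k \<le> exp (1 / real n) ^ k"
    by (intro power_mono) (auto simp: add.commute exp_ge_add_one_self_aux)
  also have "\<dots> = exp (real k / real n)"
    by (simp add: exp_of_nat_mult[symmetric])
  also have "\<dots> \<le> exp 1" using assms by simp
  also have "\<dots> \<le> 3" by (rule exp_le)
  finally have "real n ^ k * (1 + 1 / real n) ^ k \<le> real n ^ k * 3"
    by (intro mult_left_mono) auto
  moreover have "real ((n + 1) ^ k) = real n ^ k * (1 + 1 / real n) ^ k"
    using assms(1) by (simp add: power_mult_distrib[symmetric] field_simps)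
  ultimately show ?thesis by (simp add: mult.commute)
qed

lemma power_div_power_lt_exp:
  fixes x B L :: real and K m :: nat
  assumes "0 < x" "x \<le> 1" "0 < B" "0 < L" "real K * x \<le> B / 4"
    and "- 4 * ln x \<le> L" "- ln x \<le> B / 4" "real m \<le> B / L + 1"
  shows "(1 + x) ^ K / x ^ m < exp B"
proof -
  have "(1 + x) ^ K \<le> exp x ^ K"
    using assms(1) by (intro power_mono) (auto simp: add.commute exp_ge_add_one_self_aux)
  also have "\<dots> \<le> exp (B / 4)"
    using assms(5) by (simp add: exp_of_nat_mult[symmetric])
  finally have numerator: "(1 + x) ^ K \<le> exp (B / 4)" .
  have "- ln x * real m \<le> - ln x * (B / L + 1)"
    using assms(1,2,8) by (intro mult_left_mono) auto
  also have "\<dots> = B * (- ln x / L) + - ln x"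
    using assms(4) by (simp add: field_simps)
  also have "\<dots> \<le> B * (1 / 4) + B / 4"
    using assms(3,4,6,7) by (intro add_mono mult_left_mono) (auto simp: field_simps)
  finally have "- (real m * ln x) \<le> B / 2" by (simp add: mult.commute)
  moreover have "1 / x ^ m = exp (- (real m * ln x))"
    using assms(1) by (simp add: exp_minus exp_of_nat_mult inverse_eq_divide)
  ultimately have denominator: "1 / x ^ m \<le> exp (B / 2)" by simp
  have "(1 + x) ^ K / x ^ m \<le> exp (B / 4) * exp (B / 2)"
    using mult_mono[OF numerator denominator] assms(1) by simp
  also have "\<dots> < exp B"
    using assms(3) by (simp flip: exp_add)
  finally show ?thesis .
qed

lemma small_type_sets_bound_lt_exp:
  fixes R p :: real and n k :: nat
  defines "x \<equiv> min 1 (R * ln 2 / 12)" and "B \<equiv> R * real n ^ k * ln 2"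
  assumes "0 < R" "0 < p" "p \<le> 1 / (2 * (1 + exp (- 4 * ln x)))" "1 \<le> k" "k \<le> n"
    and "- 4 * ln x \<le> R * real n * ln 2"
  shows "(1 + x) ^ ((n + 1) ^ k) / x ^ nat \<lceil>B / ln ((1 - p) / p)\<rceil> < exp B"
proof (rule power_div_power_lt_exp)
  let ?L = "ln ((1 - p) / p)"
  have n: "1 \<le> n" using assms(6,7) by simp
  show x: "0 < x" "x \<le> 1" using assms(3) by (auto simp: x_def)
  have "2 * p + 2 * (p * exp (- 4 * ln x)) \<le> 1"
    using assms(5) by (simp add: le_divide_eq add_pos_pos algebra_simps)
  moreover have "0 < p * exp (- 4 * ln x)" using assms(4) by simp
  ultimately have "p * exp (- 4 * ln x) < 1 - p" "p < 1 - p" by linarith+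
  then have odds: "exp (- 4 * ln x) < (1 - p) / p" "1 < (1 - p) / p"
    using assms(4) by (simp_all add: pos_less_divide_eq mult.commute)
  then show L: "0 < ?L" by simp
  have "ln (exp (- 4 * ln x)) < ?L"
    using odds by (subst ln_less_cancel_iff) auto
  then show "- 4 * ln x \<le> ?L" by simp
  have "real n \<le> real n ^ k" using n assms(6) by (simp add: self_le_power)
  then have "R * real n * ln 2 \<le> B" unfolding B_def using assms(3) by simp
  then show "- ln x \<le> B / 4" using assms(8) by simp
  show B: "0 < B" using assms(3) n by (simp add: B_def)
  have "real ((n + 1) ^ k) * x \<le> (3 * real n ^ k) * (R * ln 2 / 12)"
    using card_types_le[OF n assms(7)] x by (intro mult_mono) (auto simp: x_def)
  then show "real ((n + 1) ^ k) * x \<le> B / 4" by (simp add: B_def)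
  have "real (nat \<lceil>B / ?L\<rceil>) = of_int \<lceil>B / ?L\<rceil>"
    using divide_pos_pos[OF B L] by (intro of_nat_nat) linarith
  then show "real (nat \<lceil>B / ?L\<rceil>) \<le> B / ?L + 1"
    using of_int_ceiling_le_add_one[of "B / ?L"] by linarith
qed

lemma id_code_errors_bounded_below:
  assumes "2 \<le> q" "0 < R"
  obtains \<delta> n\<^sub>0 :: real where "0 < \<delta>"
    "\<And>n l M Q D. n\<^sub>0 \<le> real n \<Longrightarrow> 1 \<le> l \<Longrightarrow> l * (q - 1) \<le> n \<Longrightarrow> is_id_code q n l M Q D \<Longrightarrow>
       2 powr (R * real n ^ (l * (q - 1))) \<le> real M \<Longrightarrow>
       \<delta> < max (type1_err q n l M Q D) (type2_err q n l M Q D)"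
proof -
  define x where "x = min 1 (R * ln 2 / 12)"
  define \<delta> where "\<delta> = 1 / (4 * (1 + exp (- 4 * ln x)))"
  have "0 < \<delta>" by (simp add: \<delta>_def add_pos_pos)
  moreover have "\<delta> < max (type1_err q n l M Q D) (type2_err q n l M Q D)"
    if n: "max 1 (- 4 * ln x / (R * ln 2)) \<le> real n" and l: "1 \<le> l" "l * (q - 1) \<le> n"
      and code: "is_id_code q n l M Q D" and M: "2 powr (R * real n ^ (l * (q - 1))) \<le> real M"
    for n l M Q D
  proof (rule ccontr)
    assume "\<not> ?thesis"
    then have errors: "type1_err q n l M Q D \<le> \<delta>" "type2_err q n l M Q D \<le> \<delta>" by auto
    define k where "k = l * (q - 1)"
    define B where "B = R * real n ^ k * ln 2"
    define p where "p = 2 * \<delta>"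
    define m where "m = nat \<lceil>B / ln ((1 - p) / p)\<rceil>"
    define M' where "M' = nat \<lceil>exp B\<rceil>"
    have k: "1 \<le> k" "k \<le> n" using assms(1) l by (auto simp: k_def)
    have p: "0 < p" "p < 1 / 2" "p \<le> 1 / (2 * (1 + exp (- 4 * ln x)))"
      using \<open>0 < \<delta>\<close> by (auto simp: p_def \<delta>_def field_simps add_pos_pos)
    have "- 4 * ln x / (R * ln 2) \<le> real n" using n by simp
    moreover have "0 < R * ln 2" using assms(2) by simp
    ultimately have "- 4 * ln x \<le> real n * (R * ln 2)" by (simp only: pos_divide_le_eq)
    then have "- 4 * ln x \<le> R * real n * ln 2" by (simp add: mult_ac)
    then have small_type_sets: "(1 + x) ^ ((n + 1) ^ k) / x ^ m < exp B"
      unfolding m_def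
      by (rule small_type_sets_bound_lt_exp[of R p k n, folded x_def B_def, OF assms(2) p(1,3) k])
    have M'_ge: "exp B \<le> real M'" unfolding M'_def by (rule real_nat_ceiling_ge)
    have M'_le: "M' \<le> M"
      using M by (simp add: M'_def B_def k_def powr_def mult_ac ceiling_le_iff nat_le_iff)
    have "real (M' - 1) < exp B"
      unfolding M'_def by (rule nat_ceiling_minus_one_less) simp
    then have "real (M' - 1) * p ^ m < exp B * p ^ m"
      using p(1) by simp
    also have "\<dots> \<le> (1 - p) ^ m"
      unfolding m_def by (rule exp_mult_power_le_power[OF p(1,2)])
    finally have many_samples: "real (M' - 1) * p ^ m < (1 - p) ^ m" .
    have "M' \<le> card {C. C \<subseteq> ({0..<l} \<times> {1..<q}) \<rightarrow>\<^sub>E {0..n} \<and> card C \<le> m}"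
      using id_code_card_le_small_type_sets[OF code errors M'_le] p many_samples by (simp add: p_def)
    also have "real \<dots> \<le> (1 + x) ^ card (({0..<l} \<times> {1..<q}) \<rightarrow>\<^sub>E {0..n}) / x ^ m"
      using assms(2) by (intro card_small_subsets_le finite_PiE) (auto simp: x_def)
    also have "card (({0..<l} \<times> {1..<q}) \<rightarrow>\<^sub>E {0..n}) = (n + 1) ^ k"
      by (simp add: card_PiE card_cartesian_product k_def)
    finally show False using small_type_sets M'_ge by simp
  qed
  ultimately show ?thesis by (rule that)
qed

lemma eventually_mult_le_of_tendsto_zero:
  fixes n l :: "nat \<Rightarrow> nat" and c :: nat
  assumes "filterlim n at_top sequentially" "(\<lambda>i. real (l i) / real (n i) powr \<omega>) \<longlonglongrightarrow> 0"
    and "\<omega> \<le> 1" "0 < c"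
  shows "eventually (\<lambda>i. l i * c \<le> n i) sequentially"
proof -
  have "eventually (\<lambda>i. real (l i) / real (n i) powr \<omega> < 1 / real c) sequentially"
    using assms(2,4) by (intro order_tendstoD(2)) auto
  moreover have "eventually (\<lambda>i. 1 \<le> n i) sequentially"
    using assms(1) by (simp add: filterlim_at_top)
  ultimately show ?thesis
  proof eventually_elim
    case (elim i)
    then have "real (l i) * real c < real (n i) powr \<omega>"
      using assms(4) by (simp add: field_simps)
    also have "\<dots> \<le> real (n i) powr 1"
      using elim assms(3) by (intro powr_mono) auto
    finally have "real (l i * c) < real (n i)" using elim by simp
    then show ?case by linarith
  qed
qed

lemma no_id_code_sequence:
  fixes n l M :: "nat \<Rightarrow> nat" and Q :: "nat \<Rightarrow> nat \<Rightarrow> nat list list \<Rightarrow> real"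
    and D :: "nat \<Rightarrow> nat \<Rightarrow> nat list list set"
  assumes "2 \<le> q" "0 < \<mu>" "0 < R" "\<omega> \<le> 1"
    and n: "filterlim n at_top sequentially"
    and l: "(\<lambda>i. real (l i) / real (n i) powr \<omega>) \<longlonglongrightarrow> 0" "\<And>i. 1 \<le> l i"
    and codes: "\<And>i. is_id_code q (n i) (l i) (M i) (Q i) (D i)"
      "\<And>i. 2 powr (R * real (n i) ^ (l i * (q - 1))) \<le> real (M i)"
    and errors: "\<And>i. type1_err q (n i) (l i) (M i) (Q i) (D i) < real (n i) powr - \<mu>"
      "\<And>i. type2_err q (n i) (l i) (M i) (Q i) (D i) < real (n i) powr - \<mu>"
  shows False
proof -
  obtain \<delta> n\<^sub>0 where "0 < \<delta>" and errors_large: "\<And>n l M Q D. n\<^sub>0 \<le> real n \<Longrightarrow> 1 \<le> l \<Longrightarrow>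
      l * (q - 1) \<le> n \<Longrightarrow> is_id_code q n l M Q D \<Longrightarrow> 2 powr (R * real n ^ (l * (q - 1))) \<le> real M \<Longrightarrow>
      \<delta> < max (type1_err q n l M Q D) (type2_err q n l M Q D)"
    using id_code_errors_bounded_below[OF assms(1,3)] by auto
  have real_n: "filterlim (\<lambda>i. real (n i)) at_top sequentially"
    using filterlim_compose[OF filterlim_real_sequentially n] by (simp add: o_def)
  have "((\<lambda>i. real (n i) powr - \<mu>) \<longlongrightarrow> 0) sequentially"
    using tendsto_neg_powr[OF _ real_n] assms(2) by simp
  then have "eventually (\<lambda>i. real (n i) powr - \<mu> < \<delta>) sequentially"
    using \<open>0 < \<delta>\<close> by (rule order_tendstoD(2))
  moreover have "eventually (\<lambda>i. n\<^sub>0 \<le> real (n i)) sequentially"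
    using real_n by (simp add: filterlim_at_top)
  moreover have "eventually (\<lambda>i. l i * (q - 1) \<le> n i) sequentially"
    using eventually_mult_le_of_tendsto_zero[OF n l(1) assms(4)] assms(1) by simp
  ultimately have "eventually (\<lambda>i. real (n i) powr - \<mu> < \<delta> \<and> n\<^sub>0 \<le> real (n i)
      \<and> l i * (q - 1) \<le> n i) sequentially"
    by eventually_elim blast
  then obtain i where i: "real (n i) powr - \<mu> < \<delta>" "n\<^sub>0 \<le> real (n i)" "l i * (q - 1) \<le> n i"
    unfolding eventually_sequentially by blast
  have "\<delta> < max (type1_err q (n i) (l i) (M i) (Q i) (D i)) (type2_err q (n i) (l i) (M i) (Q i) (D i))"
    using i(2) l(2)[of i] i(3) codes[of i] by (rule errors_large)
  then show False using errors[of i] i(1) by (auto simp: less_max_iff_disj)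
qed

theorem theorem2:
  fixes q :: nat and \<mu> R :: real
  assumes "q \<ge> 2" and "\<mu> > 0" and "R > 0"
  shows "\<not> (\<exists>(n :: nat \<Rightarrow> nat) (l :: nat \<Rightarrow> nat) (M :: nat \<Rightarrow> nat)
              (Q :: nat \<Rightarrow> nat \<Rightarrow> nat list list \<Rightarrow> real) (D :: nat \<Rightarrow> nat \<Rightarrow> nat list list set).
           filterlim n at_top sequentially \<and>
           ((\<lambda>i. real (l i) / real (n i) powr min 1 (\<mu> / 4)) \<longlonglongrightarrow> 0) \<and>
           (\<forall>i. n i \<ge> 1 \<and> l i \<ge> 1 \<and> is_id_code q (n i) (l i) (M i) (Q i) (D i) \<and>
                real (M i) \<ge> 2 powr (R * real (n i) ^ (l i * (q - 1))) \<and>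
                type1_err q (n i) (l i) (M i) (Q i) (D i) < real (n i) powr (- \<mu>) \<and>
                type2_err q (n i) (l i) (M i) (Q i) (D i) < real (n i) powr (- \<mu>)))"
  using no_id_code_sequence[OF assms(1-3) min.cobounded1] by blast

end
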